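(* Let $\alpha,\beta$ be parameters and $q$ an indeterminate, and let $E_{n,k}(\alpha,\beta,q)$ ($n\ge k\ge 0$) be the numbers defined in the context. For all integers $n\geq k\geq 0$, \[ E_{n,k}(\alpha,\beta,q)=\sum_{\sigma\in\mathfrak{S}_{n+1,k}}[\alpha]^{\mathrm{lrmin}(\sigma)-1}[\beta]^{\mathrm{rlmin}(\sigma)-1}q^{\widetilde{\mathrm{maj}}(\sigma)}, \] where $\mathfrak{S}_{n+1,k}$ is the set of permutations of $\{1,\dots,n+1\}$ with exactly $k$ descents and, for $\sigma\in\mathfrak{S}_{n+1}$, \[ \widetilde{\mathrm{maj}}(\sigma)=(1+\mathrm{des}(\sigma)-\mathrm{lrmin}(\sigma))(\alpha-1)+(n+1-\mathrm{rlmin}(\sigma))(\beta-1)+\mathrm{maj}(\sigma). \]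
   Context: For a real $x$, $[x]=\frac{1-q^x}{1-q}$. The numbers $E_{n,k}(\alpha,\beta,q)$ (in the paper, $E_{n,k}(\alpha,\beta,q)=A(k,n-k\,|\,\alpha,\beta)_q$, Gaudin's $q$-analogue of the Carlitz–Scoville numbers obtained by normalizing Nadeau–Tewari remixed Eulerian numbers) are determined by $E_{0,0}=1$, $E_{n,k}=0$ if $k\notin\{0,\dots,n\}$, and for $n\ge1$ \[ E_{n,k}(\alpha,\beta,q)=q^{\beta+k-1}[n-k+\alpha]E_{n-1,k-1}(\alpha,\beta,q)+[k+\beta]E_{n-1,k}(\alpha,\beta,q). \] For $\sigma=\sigma_1\cdots\sigma_m\in\mathfrak{S}_m$: $\mathrm{des}(\sigma)=|\{i\in[m-1]:\sigma_i>\sigma_{i+1}\}|$; $\mathrm{maj}(\sigma)=\sum_{\sigma_i>\sigma_{i+1}}i$; $\mathrm{lrmin}(\sigma)=|\{i:\sigma_i<\sigma_j\ \forall j<i\}|$ (left-to-right minima); $\mathrm{rlmin}(\sigma)=|\{i:\sigma_i<\sigma_j\ \forall j>i\}|$ (right-to-left minima). *)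

theory Defs
  imports Complex_Main "HOL-Combinatorics.Multiset_Permutations"
begin

definition qint :: "real \<Rightarrow> real \<Rightarrow> real" where
  "qint q x = (1 - q powr x) / (1 - q)"

fun E :: "real \<Rightarrow> real \<Rightarrow> real \<Rightarrow> nat \<Rightarrow> nat \<Rightarrow> real" where
  "E a b q 0 k = (if k = 0 then 1 else 0)"
| "E a b q (Suc n) k =
     (if k = 0 then 0
      else q powr (b + real k - 1) * qint q (real (Suc n) - real k + a) * E a b q n (k - 1))
     + qint q (real k + b) * E a b q n k"

text \<open>Permutation statistics on words (lists); positions are 1-based as in the paper,
  list index i corresponds to position i+1.\<close>
definition descents :: "nat list \<Rightarrow> nat set" where
  "descents s = {i. Suc i < length s \<and> s ! i > s ! Suc i}"

definition des :: "nat list \<Rightarrow> nat" where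
  "des s = card (descents s)"

definition maj :: "nat list \<Rightarrow> nat" where
  "maj s = (\<Sum>i\<in>descents s. Suc i)"

definition lrmin :: "nat list \<Rightarrow> nat" where
  "lrmin s = card {i. i < length s \<and> (\<forall>j<i. s ! i < s ! j)}"

definition rlmin :: "nat list \<Rightarrow> nat" where
  "rlmin s = card {i. i < length s \<and> (\<forall>j. i < j \<and> j < length s \<longrightarrow> s ! i < s ! j)}"

definition majt :: "real \<Rightarrow> real \<Rightarrow> nat \<Rightarrow> nat list \<Rightarrow> real" where
  "majt a b n s = (1 + real (des s) - real (lrmin s)) * (a - 1)
                 + (real (n + 1) - real (rlmin s)) * (b - 1) + real (maj s)"

end

theory Submission
  imports Defs
begin

text \<open>Every permutation of \<open>{1..n+2}\<close> arises in exactly one way by inserting the letter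
  \<open>n+2\<close> into one of the \<open>n+2\<close> slots of a permutation \<open>s\<close> of \<open>{1..n+1}\<close>. Because the
  inserted letter is the largest, the statistics change in a controlled way: at the front it adds
  a left-to-right minimum, a descent and \<open>des s + 1\<close> to \<open>maj\<close>, so the weight gains the factor
  \<open>[\<alpha>] q^(\<beta>+des s)\<close>; at the end it adds a right-to-left minimum and the factor \<open>[\<beta>]\<close>; in the
  slot of a descent followed by \<open>c\<close> further descents it keeps \<open>des\<close> and gives \<open>q^(\<beta>+c)\<close>; in
  the \<open>r\<close>-th ascent slot it raises \<open>des\<close> by one and gives \<open>q^(\<alpha>+\<beta>+des s+r)\<close>. Summing over
  the slots, those keeping \<open>des s = k\<close> contribute \<open>[k+\<beta>]\<close> and those raising \<open>des s = k-1\<close>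
  to \<open>k\<close> contribute \<open>q^(\<beta>+k-1) [n+1-k+\<alpha>]\<close>: this is the recurrence defining \<open>E\<close>.\<close>

section \<open>q-integers and finite sums\<close>

lemma qint_add_nat:
  assumes "0 < q" "q \<noteq> 1"
  shows "qint q (real n + x) = qint q x + (\<Sum>c<n. q powr (x + real c))"
proof (induction n)
  case (Suc n)
  have "q powr (real (Suc n) + x) = q powr (real n + x) * q"
    using assms(1) by (simp add: powr_add algebra_simps)
  then have "qint q (real (Suc n) + x) = qint q (real n + x) + q powr (x + real n)"
    using assms by (simp add: qint_def field_simps)
  then show ?case
    using Suc by simp
qed simp

lemma sum_rank_less:
  fixes S :: "'a::linorder set"
  assumes "finite S"
  shows "(\<Sum>x\<in>S. g (card {y\<in>S. y < x})) = (\<Sum>c<card S. g c)"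
  using assms
proof (induction rule: finite_linorder_max_induct)
  case (insert b A)
  have "{y\<in>insert b A. y < x} = {y\<in>A. y < x}" if "x \<in> A" for x
    using that insert.hyps(2) by auto
  moreover have "{y\<in>insert b A. y < b} = A" and "b \<notin> A"
    using insert.hyps(2) by auto
  ultimately show ?case
    using insert.hyps(1) insert.IH by (simp add: add.commute)
qed simp

lemma sum_rank_greater:
  fixes S :: "'a::linorder set"
  assumes "finite S"
  shows "(\<Sum>x\<in>S. g (card {y\<in>S. x < y})) = (\<Sum>c<card S. g c)"
  using assms
proof (induction rule: finite_linorder_min_induct)
  case (insert b A)
  have "{y\<in>insert b A. x < y} = {y\<in>A. x < y}" if "x \<in> A" for x
    using that insert.hyps(2) by auto
  moreover have "{y\<in>insert b A. b < y} = A" and "b \<notin> A"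
    using insert.hyps(2) by auto
  ultimately show ?case
    using insert.hyps(1) insert.IH by (simp add: add.commute)
qed simp

lemma add_card_greater_eq_card_add_card_less:
  assumes "D \<subseteq> {..<N}" "x < N" "x \<notin> D"
  shows "x + card {j\<in>D. x < j} = card D + card {y\<in>{..<N} - D. y < x}"
proof -
  have fin: "finite D"
    using assms(1) finite_subset by blast
  have "{..<x} = {j\<in>D. j < x} \<union> {y\<in>{..<N} - D. y < x}"
    using assms(2) by auto
  then have "card {..<x} = card ({j\<in>D. j < x} \<union> {y\<in>{..<N} - D. y < x})"
    by (rule arg_cong)
  also have "\<dots> = card {j\<in>D. j < x} + card {y\<in>{..<N} - D. y < x}"
    by (rule card_Un_disjoint) (use fin in auto)
  finally have below: "x = card {j\<in>D. j < x} + card {y\<in>{..<N} - D. y < x}"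
    by simp
  have "D = {j\<in>D. j < x} \<union> {j\<in>D. x < j}"
    using assms(3) by (auto simp: not_less le_less)
  then have "card D = card ({j\<in>D. j < x} \<union> {j\<in>D. x < j})"
    by (rule arg_cong)
  also have "\<dots> = card {j\<in>D. j < x} + card {j\<in>D. x < j}"
    by (rule card_Un_disjoint) (use fin in auto)
  finally show ?thesis
    using below by linarith
qed

lemma sum_atMost_Suc_split:
  fixes F :: "nat \<Rightarrow> 'a::comm_monoid_add"
  assumes "D \<subseteq> {..<N}"
  shows "(\<Sum>i\<le>Suc N. F i) = F 0 + (\<Sum>x\<in>D. F (Suc x)) + (\<Sum>x\<in>{..<N} - D. F (Suc x)) + F (Suc N)"
proof -
  have "(\<Sum>i\<le>Suc N. F i) = F 0 + (\<Sum>i\<le>N. F (Suc i))"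
    by (rule sum.atMost_Suc_shift)
  also have "(\<Sum>i\<le>N. F (Suc i)) = (\<Sum>x<N. F (Suc x)) + F (Suc N)"
    by (simp add: lessThan_Suc_atMost[symmetric])
  also have "(\<Sum>x<N. F (Suc x)) = (\<Sum>x\<in>D. F (Suc x)) + (\<Sum>x\<in>{..<N} - D. F (Suc x))"
    using sum.subset_diff[OF assms finite_lessThan] by (simp add: add.commute)
  finally show ?thesis
    by (simp add: add.assoc)
qed

lemma sum_split_around:
  fixes f :: "nat \<Rightarrow> 'b::comm_monoid_add"
  assumes "finite D"
  shows "sum f D = sum f {j\<in>D. j < x} + (if x \<in> D then f x else 0) + sum f {j\<in>D. x < j}"
proof -
  have "sum f D = (\<Sum>j\<in>D. (if j < x then f j else 0) + (if j = x then f j else 0)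
      + (if x < j then f j else 0))"
    by (rule sum.cong) auto
  also have "\<dots> = sum f {j\<in>D. j < x} + (if x \<in> D then f x else 0) + sum f {j\<in>D. x < j}"
    using assms by (simp add: sum.distrib sum.inter_filter)
  finally show ?thesis .
qed

lemma sum_split_at:
  fixes f :: "nat \<Rightarrow> 'b::comm_monoid_add"
  assumes "finite D"
  shows "sum f D = sum f {j\<in>D. Suc j < i} + (if 0 < i \<and> i - 1 \<in> D then f (i - 1) else 0)
    + sum f {j\<in>D. i \<le> j}"
proof (cases i)
  case (Suc x)
  have "{j\<in>D. Suc x \<le> j} = {j\<in>D. x < j}"
    by auto
  then show ?thesis
    using sum_split_around[OF assms, of f x] Suc by simp
qed simp

section \<open>Inserting a letter into a word\<close>

definition insert_nth :: "'a \<Rightarrow> nat \<Rightarrow> 'a list \<Rightarrow> 'a list" where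
  "insert_nth x i xs = take i xs @ x # drop i xs"

lemma length_insert_nth [simp]: "length (insert_nth x i xs) = Suc (length xs)"
  by (simp add: insert_nth_def)

lemma set_insert_nth [simp]: "set (insert_nth x i xs) = insert x (set xs)"
  unfolding insert_nth_def by (metis Un_insert_right append_take_drop_id list.set(2) set_append)

lemma distinct_insert_nth: "distinct (insert_nth x i xs) \<longleftrightarrow> x \<notin> set xs \<and> distinct xs"
proof -
  have "distinct (take i xs @ x # drop i xs) \<longleftrightarrow> distinct (x # take i xs @ drop i xs)"
    unfolding distinct_append distinct.simps set_append list.set by blast
  then show ?thesis
    unfolding insert_nth_def by simp
qed

lemma nth_insert_nth:
  assumes "i \<le> length xs"
  shows "insert_nth x i xs ! j = (if j < i then xs ! j else if j = i then x else xs ! (j - 1))"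
  using assms by (auto simp: insert_nth_def nth_append min_def nth_Cons' nth_drop)

lemma nth_insert_nth_self: "i \<le> length xs \<Longrightarrow> insert_nth x i xs ! i = x"
  by (simp add: nth_insert_nth)

lemma rev_insert_nth:
  assumes "i \<le> length xs"
  shows "rev (insert_nth x i xs) = insert_nth x (length xs - i) (rev xs)"
  using assms by (simp add: insert_nth_def rev_take rev_drop)

lemma takeWhile_neq_append_Cons: "x \<notin> set us \<Longrightarrow> takeWhile (\<lambda>y. y \<noteq> x) (us @ x # vs) = us"
  by (induction us) auto

lemma not_in_set_take: "x \<notin> set xs \<Longrightarrow> x \<notin> set (take i xs)"
  using in_set_takeD by fast

lemma remove1_insert_nth: "x \<notin> set xs \<Longrightarrow> remove1 x (insert_nth x i xs) = xs"
  using not_in_set_take[of x xs i] by (simp add: insert_nth_def remove1_append)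

lemma length_takeWhile_insert_nth:
  "x \<notin> set xs \<Longrightarrow> i \<le> length xs \<Longrightarrow> length (takeWhile (\<lambda>y. y \<noteq> x) (insert_nth x i xs)) = i"
  using not_in_set_take[of x xs i] by (simp add: insert_nth_def takeWhile_neq_append_Cons)

lemma insert_nth_remove1:
  assumes "x \<in> set t"
  shows "insert_nth x (length (takeWhile (\<lambda>y. y \<noteq> x) t)) (remove1 x t) = t"
proof -
  obtain us vs where "t = us @ x # vs" "x \<notin> set us"
    using split_list_first[OF assms] by blast
  then show ?thesis
    by (simp add: insert_nth_def remove1_append takeWhile_neq_append_Cons)
qed

lemma bij_betw_insert_nth_permutations:
  assumes "x \<notin> A"
  shows "bij_betw (\<lambda>(s, i). insert_nth x i s) (permutations_of_set A \<times> {..card A})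
    (permutations_of_set (insert x A))"
proof (rule bij_betwI[where g = "\<lambda>t. (remove1 x t, length (takeWhile (\<lambda>y. y \<noteq> x) t))"])
  show "(\<lambda>(s, i). insert_nth x i s)
      \<in> permutations_of_set A \<times> {..card A} \<rightarrow> permutations_of_set (insert x A)"
  proof
    fix p assume "p \<in> permutations_of_set A \<times> {..card A}"
    then obtain s i where "p = (s, i)" "set s = A" "distinct s"
      by (auto simp: permutations_of_set_def)
    then show "(\<lambda>(s, i). insert_nth x i s) p \<in> permutations_of_set (insert x A)"
      using assms by (simp add: permutations_of_set_def distinct_insert_nth)
  qed
  show "(\<lambda>t. (remove1 x t, length (takeWhile (\<lambda>y. y \<noteq> x) t)))
      \<in> permutations_of_set (insert x A) \<rightarrow> permutations_of_set A \<times> {..card A}"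
  proof
    fix t assume "t \<in> permutations_of_set (insert x A)"
    then obtain us vs where t: "t = us @ x # vs" "x \<notin> set us" "distinct t" "set t = insert x A"
      using split_list_first[of x t] by (auto simp: permutations_of_set_def)
    then have "us @ vs \<in> permutations_of_set A"
      using assms by (auto simp: permutations_of_set_def)
    then show "(remove1 x t, length (takeWhile (\<lambda>y. y \<noteq> x) t)) \<in> permutations_of_set A \<times> {..card A}"
      using t length_finite_permutations_of_set[of "us @ vs" A]
      by (simp add: remove1_append takeWhile_neq_append_Cons)
  qed
  fix p assume "p \<in> permutations_of_set A \<times> {..card A}"
  then obtain s i where "p = (s, i)" "s \<in> permutations_of_set A" "i \<le> card A"
    by auto
  then show "(remove1 x ((\<lambda>(s, i). insert_nth x i s) p),
      length (takeWhile (\<lambda>y. y \<noteq> x) ((\<lambda>(s, i). insert_nth x i s) p))) = p"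
    using assms length_finite_permutations_of_set[of s A]
    by (auto simp: permutations_of_set_def remove1_insert_nth length_takeWhile_insert_nth)
next
  fix t assume "t \<in> permutations_of_set (insert x A)"
  then show "(\<lambda>(s, i). insert_nth x i s) (remove1 x t, length (takeWhile (\<lambda>y. y \<noteq> x) t)) = t"
    by (simp add: permutations_of_set_def insert_nth_remove1)
qed

section \<open>Left-to-right and right-to-left minima\<close>

definition shift_past :: "nat \<Rightarrow> nat \<Rightarrow> nat" where
  "shift_past i j = (if j < i then j else Suc j)"

lemma strict_mono_shift_past: "strict_mono (shift_past i)"
  by (auto simp: strict_mono_def shift_past_def)

lemma inj_shift_past: "inj (shift_past i)"
  using strict_mono_imp_inj_on[OF strict_mono_shift_past] .

lemma shift_past_image_not_mem [simp]: "i \<notin> shift_past i ` A"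
  by (auto simp: shift_past_def split: if_split_asm)

lemma nth_insert_nth_shift_past:
  "i \<le> length xs \<Longrightarrow> insert_nth x i xs ! shift_past i p = xs ! p"
  by (simp add: nth_insert_nth shift_past_def)

lemma shift_past_cases:
  obtains "j = i" | p where "j = shift_past i p"
proof (cases "i < j")
  case True
  then have "j = shift_past i (j - 1)"
    by (simp add: shift_past_def)
  then show ?thesis
    by (rule that(2))
next
  case False
  show ?thesis
  proof (cases "j = i")
    case True
    then show ?thesis
      by (rule that(1))
  next
    case False
    with \<open>\<not> i < j\<close> have "j = shift_past i j"
      by (simp add: shift_past_def)
    then show ?thesis
      by (rule that(2))
  qed
qed

lemma less_shift_past_iff:
  "j < shift_past i p \<longleftrightarrow> (j = i \<and> i \<le> p) \<or> (\<exists>p'<p. j = shift_past i p')"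
proof
  assume less: "j < shift_past i p"
  show "(j = i \<and> i \<le> p) \<or> (\<exists>p'<p. j = shift_past i p')"
  proof (cases j rule: shift_past_cases[of _ i])
    case 1
    then show ?thesis
      using less by (auto simp: shift_past_def split: if_splits)
  next
    case (2 p')
    then show ?thesis
      using less strict_mono_less[OF strict_mono_shift_past] by blast
  qed
next
  show "(j = i \<and> i \<le> p) \<or> (\<exists>p'<p. j = shift_past i p') \<Longrightarrow> j < shift_past i p"
    using strict_mono_less[OF strict_mono_shift_past] by (auto simp: shift_past_def)
qed

definition lrmin_positions :: "nat list \<Rightarrow> nat set" where
  "lrmin_positions s = {j. j < length s \<and> (\<forall>j'<j. s ! j < s ! j')}"

lemma lrmin_eq_card: "lrmin s = card (lrmin_positions s)"
  unfolding lrmin_def lrmin_positions_def ..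

lemma finite_lrmin_positions [simp]: "finite (lrmin_positions s)"
  unfolding lrmin_positions_def by simp

lemma lrmin_pos: "s \<noteq> [] \<Longrightarrow> 0 < lrmin s"
  unfolding lrmin_eq_card by (subst card_gt_0_iff) (auto simp: lrmin_positions_def)

lemma shift_past_mem_lrmin_positions_insert_nth:
  assumes "i \<le> length s" "\<forall>x\<in>set s. x < m"
  shows "shift_past i p \<in> lrmin_positions (insert_nth m i s) \<longleftrightarrow> p \<in> lrmin_positions s"
proof -
  let ?t = "insert_nth m i s"
  have len: "shift_past i p < length ?t \<longleftrightarrow> p < length s"
    using assms(1) by (auto simp: shift_past_def)
  have before: "(\<forall>j<shift_past i p. ?t ! shift_past i p < ?t ! j)
      \<longleftrightarrow> (i \<le> p \<longrightarrow> s ! p < m) \<and> (\<forall>p'<p. s ! p < s ! p')"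
    unfolding less_shift_past_iff using assms(1)
    by (auto simp: nth_insert_nth_shift_past nth_insert_nth_self)
  have "shift_past i p \<in> lrmin_positions ?t
      \<longleftrightarrow> p < length s \<and> (i \<le> p \<longrightarrow> s ! p < m) \<and> (\<forall>p'<p. s ! p < s ! p')"
    by (simp only: lrmin_positions_def mem_Collect_eq len before)
  then show ?thesis
    using assms(2) by (auto simp: lrmin_positions_def)
qed

lemma mem_lrmin_positions_insert_nth_self:
  assumes "i \<le> length s" "\<forall>x\<in>set s. x < m"
  shows "i \<in> lrmin_positions (insert_nth m i s) \<longleftrightarrow> i = 0"
proof
  assume i: "i \<in> lrmin_positions (insert_nth m i s)"
  show "i = 0"
  proof (rule ccontr)
    assume "i \<noteq> 0"
    then have "0 < length s"
      using assms(1) by linarith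
    then have "insert_nth m i s ! 0 < m"
      using \<open>i \<noteq> 0\<close> assms by (simp add: nth_insert_nth)
    moreover have "m < insert_nth m i s ! 0"
      using i \<open>i \<noteq> 0\<close> assms(1) by (simp add: lrmin_positions_def nth_insert_nth_self)
    ultimately show False
      by simp
  qed
qed (simp add: lrmin_positions_def)

lemma lrmin_positions_insert_nth:
  assumes "i \<le> length s" "\<forall>x\<in>set s. x < m"
  shows "lrmin_positions (insert_nth m i s)
    = (if i = 0 then {0} else {}) \<union> shift_past i ` lrmin_positions s"
proof (rule set_eqI)
  fix j
  show "j \<in> lrmin_positions (insert_nth m i s)
      \<longleftrightarrow> j \<in> (if i = 0 then {0} else {}) \<union> shift_past i ` lrmin_positions s"
  proof (cases j rule: shift_past_cases[of _ i])
    case 1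
    then show ?thesis
      using mem_lrmin_positions_insert_nth_self[OF assms] by auto
  next
    case (2 p)
    have "j \<in> shift_past i ` lrmin_positions s \<longleftrightarrow> p \<in> lrmin_positions s"
      unfolding 2 by (rule inj_image_mem_iff[OF inj_shift_past])
    moreover have "j \<notin> (if i = 0 then {0} else {})"
      using 2 by (simp add: shift_past_def)
    ultimately show ?thesis
      unfolding 2 shift_past_mem_lrmin_positions_insert_nth[OF assms] by blast
  qed
qed

lemma lrmin_insert_nth:
  assumes "i \<le> length s" "\<forall>x\<in>set s. x < m"
  shows "lrmin (insert_nth m i s) = lrmin s + (if i = 0 then 1 else 0)"
  unfolding lrmin_eq_card lrmin_positions_insert_nth[OF assms]
  by (simp add: card_image[OF inj_on_subset[OF inj_shift_past subset_UNIV]])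

lemma rlmin_eq_lrmin_rev: "rlmin s = lrmin (rev s)"
proof -
  let ?r = "\<lambda>j. length s - Suc j"
  let ?R = "{i. i < length s \<and> (\<forall>j. i < j \<and> j < length s \<longrightarrow> s ! i < s ! j)}"
  have rev_r: "rev s ! ?r i = s ! i" if "i < length s" for i
    using that by (simp add: rev_nth)
  have "bij_betw ?r ?R (lrmin_positions (rev s))"
  proof (rule bij_betw_byWitness[where f' = ?r])
    show "?r ` ?R \<subseteq> lrmin_positions (rev s)"
    proof
      fix p assume "p \<in> ?r ` ?R"
      then obtain i where i: "i < length s" "\<forall>j. i < j \<and> j < length s \<longrightarrow> s ! i < s ! j"
        and p: "p = ?r i"
        by blast
      have "rev s ! p < rev s ! j" if "j < p" for j
      proof -
        have "i < ?r j" "?r j < length s"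
          using that p by auto
        then have "s ! i < s ! ?r j"
          using i(2) by blast
        then show ?thesis
          using i(1) that p by (simp add: rev_nth)
      qed
      then show "p \<in> lrmin_positions (rev s)"
        using i(1) p by (auto simp: lrmin_positions_def)
    qed
    show "?r ` lrmin_positions (rev s) \<subseteq> ?R"
    proof
      fix i assume "i \<in> ?r ` lrmin_positions (rev s)"
      then obtain p where p: "p < length s" "\<forall>j<p. rev s ! p < rev s ! j" and i: "i = ?r p"
        by (auto simp: lrmin_positions_def)
      have "s ! i < s ! j" if "i < j" "j < length s" for j
      proof -
        have "?r j < p"
          using that p(1) i by auto
        then have "rev s ! p < rev s ! ?r j"
          using p(2) by blast
        then show ?thesis
          using p(1) that i by (simp add: rev_nth)
      qed
      then show "i \<in> ?R"
        using p(1) i by auto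
    qed
  qed (auto simp: lrmin_positions_def)
  then show ?thesis
    unfolding rlmin_def lrmin_eq_card by (rule bij_betw_same_card)
qed

lemma rlmin_insert_nth:
  assumes "i \<le> length s" "\<forall>x\<in>set s. x < m"
  shows "rlmin (insert_nth m i s) = rlmin s + (if i = length s then 1 else 0)"
  using lrmin_insert_nth[of "length s - i" "rev s" m] assms
  by (auto simp: rlmin_eq_lrmin_rev rev_insert_nth)

lemma rlmin_pos: "s \<noteq> [] \<Longrightarrow> 0 < rlmin s"
  by (simp add: rlmin_eq_lrmin_rev lrmin_pos)

section \<open>Descents and major index\<close>

lemma finite_descents [simp]: "finite (descents s)"
  unfolding descents_def by (rule finite_subset[of _ "{..<length s}"]) auto

lemma descents_less_length: "j \<in> descents s \<Longrightarrow> Suc j < length s"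
  by (simp add: descents_def)

lemma descents_insert_nth:
  assumes "i \<le> length s" "\<forall>x\<in>set s. x < m"
  shows "descents (insert_nth m i s) =
    {j\<in>descents s. Suc j < i} \<union> (if i < length s then {i} else {}) \<union> Suc ` {j\<in>descents s. i \<le> j}"
proof (rule set_eqI)
  fix j
  have less_m: "p < length s \<Longrightarrow> s ! p < m" for p
    using assms(2) by simp
  consider "j < i" | "j = i" | p where "j = Suc p" "i \<le> p"
  proof (cases "i < j")
    case True
    then show ?thesis
      by (intro that(3)[of "j - 1"]) auto
  next
    case False
    then show ?thesis
      using that(1,2) by linarith
  qed
  then show "j \<in> descents (insert_nth m i s) \<longleftrightarrow> j \<in> {j\<in>descents s. Suc j < i}
      \<union> (if i < length s then {i} else {}) \<union> Suc ` {j\<in>descents s. i \<le> j}"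
  proof cases
    case 1
    then show ?thesis
      using assms(1) less_m[of j] by (auto simp: descents_def nth_insert_nth)
  next
    case 2
    then show ?thesis
      using assms(1) less_m[of i] by (auto simp: descents_def nth_insert_nth)
  next
    case 3
    then show ?thesis
      using assms(1) by (auto simp: descents_def nth_insert_nth)
  qed
qed

lemma sum_descents_insert_nth:
  fixes f :: "nat \<Rightarrow> 'b::comm_monoid_add"
  assumes "i \<le> length s" "\<forall>x\<in>set s. x < m"
  shows "sum f (descents (insert_nth m i s)) = sum f {j\<in>descents s. Suc j < i}
    + (if i < length s then f i else 0) + (\<Sum>j\<in>{j\<in>descents s. i \<le> j}. f (Suc j))"
proof -
  let ?A = "{j\<in>descents s. Suc j < i}" and ?B = "if i < length s then {i} else {}"
    and ?C = "{j\<in>descents s. i \<le> j}"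
  have "sum f (descents (insert_nth m i s)) = sum f (?A \<union> ?B) + sum f (Suc ` ?C)"
    unfolding descents_insert_nth[OF assms] by (rule sum.union_disjoint) auto
  also have "sum f (?A \<union> ?B) = sum f ?A + sum f ?B"
    by (rule sum.union_disjoint) auto
  also have "sum f (Suc ` ?C) = (\<Sum>j\<in>?C. f (Suc j))"
    by (simp add: sum.reindex)
  finally show ?thesis
    by simp
qed

lemma des_insert_nth:
  assumes "i \<le> length s" "\<forall>x\<in>set s. x < m"
  shows "des (insert_nth m i s) + (if 0 < i \<and> i - 1 \<in> descents s then 1 else 0)
    = des s + (if i < length s then 1 else 0)"
proof -
  have "des (insert_nth m i s) = card {j\<in>descents s. Suc j < i} + (if i < length s then 1 else 0)
      + card {j\<in>descents s. i \<le> j}"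
    using sum_descents_insert_nth[OF assms, of "\<lambda>_. 1::nat"] unfolding des_def by simp
  moreover have "des s = card {j\<in>descents s. Suc j < i}
      + (if 0 < i \<and> i - 1 \<in> descents s then 1 else 0) + card {j\<in>descents s. i \<le> j}"
    using sum_split_at[OF finite_descents, of "\<lambda>_. 1::nat" s i] unfolding des_def by simp
  ultimately show ?thesis
    by linarith
qed

lemma maj_insert_nth:
  assumes "i \<le> length s" "\<forall>x\<in>set s. x < m"
  shows "maj (insert_nth m i s) + (if 0 < i \<and> i - 1 \<in> descents s then i else 0)
    = maj s + (if i < length s then Suc i else 0) + card {j\<in>descents s. i \<le> j}"
proof -
  let ?C = "{j\<in>descents s. i \<le> j}"
  have "maj (insert_nth m i s) = sum Suc {j\<in>descents s. Suc j < i}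
      + (if i < length s then Suc i else 0) + (\<Sum>j\<in>?C. Suc (Suc j))"
    using sum_descents_insert_nth[OF assms, of Suc] unfolding maj_def by simp
  moreover have "(\<Sum>j\<in>?C. Suc j + 1) = sum Suc ?C + (\<Sum>j\<in>?C. 1)"
    by (rule sum.distrib)
  then have "(\<Sum>j\<in>?C. Suc (Suc j)) = sum Suc ?C + card ?C"
    by simp
  moreover have "maj s = sum Suc {j\<in>descents s. Suc j < i}
      + (if 0 < i \<and> i - 1 \<in> descents s then Suc (i - 1) else 0) + sum Suc ?C"
    using sum_split_at[OF finite_descents, of Suc s i] unfolding maj_def by simp
  moreover have "(if 0 < i \<and> i - 1 \<in> descents s then Suc (i - 1) else 0)
      = (if 0 < i \<and> i - 1 \<in> descents s then i else 0)"
    by simp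
  ultimately show ?thesis
    by linarith
qed

section \<open>Weights\<close>

definition weight :: "real \<Rightarrow> real \<Rightarrow> real \<Rightarrow> nat \<Rightarrow> nat list \<Rightarrow> real" where
  "weight a b q n s = qint q a ^ (lrmin s - 1) * qint q b ^ (rlmin s - 1) * q powr majt a b n s"

lemma weight_Suc_eq:
  assumes "s \<noteq> []" "lrmin t = lrmin s + l" "rlmin t = rlmin s + r"
  shows "weight a b q (Suc n) t = weight a b q n s * qint q a ^ l * qint q b ^ r
    * q powr ((real (des t) - real (des s) - real l) * (a - 1) + (1 - real r) * (b - 1)
      + real (maj t) - real (maj s))"
proof -
  have "lrmin t - 1 = (lrmin s - 1) + l" "rlmin t - 1 = (rlmin s - 1) + r"
    using assms lrmin_pos[OF assms(1)] rlmin_pos[OF assms(1)] by auto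
  moreover have "majt a b (Suc n) t = majt a b n s
      + ((real (des t) - real (des s) - real l) * (a - 1) + (1 - real r) * (b - 1)
        + real (maj t) - real (maj s))"
    unfolding majt_def using assms(2,3) by (simp add: algebra_simps)
  ultimately show ?thesis
    unfolding weight_def by (simp add: power_add powr_add)
qed

context
  fixes s :: "nat list" and m N :: nat and q :: real
  assumes length_s: "length s = Suc N" and less_m: "\<forall>x\<in>set s. x < m" and q_pos: "0 < q"
begin

lemma des_weight_insert_nth_first:
  "des (insert_nth m 0 s) = Suc (des s)"
  "weight a b q (Suc N) (insert_nth m 0 s)
    = weight a b q N s * qint q a * q powr (b + real (des s))"
proof -
  have i: "0 \<le> length s" "s \<noteq> []"
    using length_s by auto
  show des: "des (insert_nth m 0 s) = Suc (des s)"
    using des_insert_nth[OF i(1) less_m] length_s by simp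
  have "maj (insert_nth m 0 s) = maj s + Suc (des s)"
    using maj_insert_nth[OF i(1) less_m] length_s by (simp add: des_def)
  then show "weight a b q (Suc N) (insert_nth m 0 s)
      = weight a b q N s * qint q a * q powr (b + real (des s))"
    using weight_Suc_eq[OF i(2), of _ 1 0] des lrmin_insert_nth[OF i(1) less_m]
      rlmin_insert_nth[OF i(1) less_m] length_s
    by (simp add: algebra_simps)
qed

lemma des_weight_insert_nth_last:
  "des (insert_nth m (Suc N) s) = des s"
  "weight a b q (Suc N) (insert_nth m (Suc N) s) = weight a b q N s * qint q b"
proof -
  have i: "Suc N \<le> length s" "s \<noteq> []"
    using length_s by auto
  have no_desc: "N \<notin> descents s" "{j\<in>descents s. Suc N \<le> j} = {}"
    using descents_less_length[of _ s] length_s by fastforce+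
  show des: "des (insert_nth m (Suc N) s) = des s"
    using des_insert_nth[OF i(1) less_m] no_desc length_s by simp
  have "maj (insert_nth m (Suc N) s) = maj s"
    using maj_insert_nth[OF i(1) less_m] no_desc length_s by simp
  then show "weight a b q (Suc N) (insert_nth m (Suc N) s) = weight a b q N s * qint q b"
    using weight_Suc_eq[OF i(2), of _ 0 1] des lrmin_insert_nth[OF i(1) less_m]
      rlmin_insert_nth[OF i(1) less_m] length_s q_pos
    by simp
qed

lemma des_weight_insert_nth_descent:
  assumes "x \<in> descents s"
  shows "des (insert_nth m (Suc x) s) = des s"
    "weight a b q (Suc N) (insert_nth m (Suc x) s)
      = weight a b q N s * q powr (b + real (card {j\<in>descents s. x < j}))"
proof -
  have x: "Suc x < length s"
    using descents_less_length[OF assms] .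
  then have i: "Suc x \<le> length s" "s \<noteq> []"
    by auto
  have after: "{j\<in>descents s. Suc x \<le> j} = {j\<in>descents s. x < j}"
    by auto
  show des: "des (insert_nth m (Suc x) s) = des s"
    using des_insert_nth[OF i(1) less_m] assms x by simp
  have "maj (insert_nth m (Suc x) s) = maj s + Suc (card {j\<in>descents s. x < j})"
    using maj_insert_nth[OF i(1) less_m] assms x after by simp
  then show "weight a b q (Suc N) (insert_nth m (Suc x) s)
      = weight a b q N s * q powr (b + real (card {j\<in>descents s. x < j}))"
    using weight_Suc_eq[OF i(2), of _ 0 0] des lrmin_insert_nth[OF i(1) less_m]
      rlmin_insert_nth[OF i(1) less_m] x
    by (simp add: algebra_simps)
qed

lemma des_weight_insert_nth_ascent:
  assumes "x < N" "x \<notin> descents s"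
  shows "des (insert_nth m (Suc x) s) = Suc (des s)"
    "weight a b q (Suc N) (insert_nth m (Suc x) s)
      = weight a b q N s * q powr (a + b + real x + real (card {j\<in>descents s. x < j}))"
proof -
  have x: "Suc x < length s"
    using assms(1) length_s by simp
  then have i: "Suc x \<le> length s" "s \<noteq> []"
    by auto
  have after: "{j\<in>descents s. Suc x \<le> j} = {j\<in>descents s. x < j}"
    by auto
  show des: "des (insert_nth m (Suc x) s) = Suc (des s)"
    using des_insert_nth[OF i(1) less_m] assms x by simp
  have "maj (insert_nth m (Suc x) s) = maj s + Suc (Suc x) + card {j\<in>descents s. x < j}"
    using maj_insert_nth[OF i(1) less_m] assms x after by simp
  then show "weight a b q (Suc N) (insert_nth m (Suc x) s)
      = weight a b q N s * q powr (a + b + real x + real (card {j\<in>descents s. x < j}))"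
    using weight_Suc_eq[OF i(2), of _ 0 0] des lrmin_insert_nth[OF i(1) less_m]
      rlmin_insert_nth[OF i(1) less_m] x
    by (simp add: algebra_simps)
qed

lemma descents_subset: "descents s \<subseteq> {..<N}"
  using descents_less_length[of _ s] length_s by auto

lemma sum_weight_insert_nth_keeping_des:
  assumes "q \<noteq> 1"
  shows "(\<Sum>x\<in>descents s. weight a b q (Suc N) (insert_nth m (Suc x) s))
      + weight a b q (Suc N) (insert_nth m (Suc N) s)
    = weight a b q N s * qint q (real (des s) + b)"
proof -
  have "(\<Sum>x\<in>descents s. weight a b q (Suc N) (insert_nth m (Suc x) s))
      = weight a b q N s * (\<Sum>x\<in>descents s. q powr (b + real (card {j\<in>descents s. x < j})))"
    unfolding sum_distrib_left by (rule sum.cong) (simp_all add: des_weight_insert_nth_descent)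
  also have "\<dots> = weight a b q N s * (\<Sum>c<des s. q powr (b + real c))"
    using sum_rank_greater[of "descents s" "\<lambda>c. q powr (b + real c)"] by (simp add: des_def)
  finally show ?thesis
    unfolding qint_add_nat[OF q_pos assms]
    using des_weight_insert_nth_last(2) by (simp add: algebra_simps)
qed

lemma sum_weight_insert_nth_raising_des:
  assumes "q \<noteq> 1"
  shows "weight a b q (Suc N) (insert_nth m 0 s)
      + (\<Sum>x\<in>{..<N} - descents s. weight a b q (Suc N) (insert_nth m (Suc x) s))
    = weight a b q N s * (q powr (b + real (des s)) * qint q (real N - real (des s) + a))"
proof -
  let ?A = "{..<N} - descents s" and ?d = "des s"
  have weight_slot: "weight a b q (Suc N) (insert_nth m (Suc x) s)
      = weight a b q N s * q powr (a + b + real ?d + real (card {y\<in>?A. y < x}))"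
    if "x \<in> ?A" for x
  proof -
    from that have x: "x < N" "x \<notin> descents s"
      by auto
    then have "real x + real (card {j\<in>descents s. x < j}) = real ?d + real (card {y\<in>?A. y < x})"
      using add_card_greater_eq_card_add_card_less[OF descents_subset x] unfolding des_def
      by linarith
    then show ?thesis
      using des_weight_insert_nth_ascent(2)[OF x] by (simp add: algebra_simps)
  qed
  have "card ?A = N - ?d"
    using descents_subset by (simp add: card_Diff_subset des_def)
  moreover have "(\<Sum>x\<in>?A. weight a b q (Suc N) (insert_nth m (Suc x) s))
      = weight a b q N s * (\<Sum>x\<in>?A. q powr (a + b + real ?d + real (card {y\<in>?A. y < x})))"
    unfolding sum_distrib_left using weight_slot by (rule sum.cong[OF refl])
  ultimately have ascents: "(\<Sum>x\<in>?A. weight a b q (Suc N) (insert_nth m (Suc x) s))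
      = weight a b q N s * (\<Sum>c<N - ?d. q powr (a + b + real ?d + real c))"
    using sum_rank_less[of ?A "\<lambda>c. q powr (a + b + real ?d + real c)"] by simp
  have "?d \<le> N"
    using card_mono[OF finite_lessThan descents_subset] by (simp add: des_def)
  then have "qint q (real N - real ?d + a) = qint q a + (\<Sum>c<N - ?d. q powr (a + real c))"
    using qint_add_nat[OF q_pos assms, of "N - ?d" a] by (simp add: of_nat_diff)
  then have "q powr (b + real ?d) * qint q (real N - real ?d + a)
      = qint q a * q powr (b + real ?d) + (\<Sum>c<N - ?d. q powr (a + b + real ?d + real c))"
    by (simp add: sum_distrib_left powr_add[symmetric] algebra_simps)
  then show ?thesis
    using des_weight_insert_nth_first(2) ascents by (simp add: algebra_simps)
qed

lemma sum_weight_insert_nth: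
  assumes "q \<noteq> 1"
  shows "(\<Sum>i\<le>Suc N. if des (insert_nth m i s) = k
      then weight a b q (Suc N) (insert_nth m i s) else 0)
    = weight a b q N s * ((if des s = k then qint q (real (des s) + b) else 0)
      + (if Suc (des s) = k
         then q powr (b + real (des s)) * qint q (real N - real (des s) + a) else 0))"
proof -
  define F where
    "F i = (if des (insert_nth m i s) = k then weight a b q (Suc N) (insert_nth m i s) else 0)" for i
  have F_first: "F 0 = (if Suc (des s) = k then weight a b q (Suc N) (insert_nth m 0 s) else 0)"
    unfolding F_def using des_weight_insert_nth_first(1) by simp
  have F_last:
    "F (Suc N) = (if des s = k then weight a b q (Suc N) (insert_nth m (Suc N) s) else 0)"
    unfolding F_def using des_weight_insert_nth_last(1) by simp
  have "(\<Sum>x\<in>descents s. F (Suc x))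
      = (\<Sum>x\<in>descents s. if des s = k then weight a b q (Suc N) (insert_nth m (Suc x) s) else 0)"
    unfolding F_def by (rule sum.cong) (simp_all add: des_weight_insert_nth_descent)
  then have F_descents: "(\<Sum>x\<in>descents s. F (Suc x))
      = (if des s = k then (\<Sum>x\<in>descents s. weight a b q (Suc N) (insert_nth m (Suc x) s)) else 0)"
    by (cases "des s = k") simp_all
  have "(\<Sum>x\<in>{..<N} - descents s. F (Suc x)) = (\<Sum>x\<in>{..<N} - descents s.
      if Suc (des s) = k then weight a b q (Suc N) (insert_nth m (Suc x) s) else 0)"
    unfolding F_def by (rule sum.cong) (simp_all add: des_weight_insert_nth_ascent)
  then have F_ascents: "(\<Sum>x\<in>{..<N} - descents s. F (Suc x)) = (if Suc (des s) = k
      then (\<Sum>x\<in>{..<N} - descents s. weight a b q (Suc N) (insert_nth m (Suc x) s)) else 0)"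
    by (cases "Suc (des s) = k") simp_all
  show ?thesis
    unfolding F_def[symmetric] sum_atMost_Suc_split[OF descents_subset]
      F_first F_last F_descents F_ascents
    using sum_weight_insert_nth_keeping_des[OF assms] sum_weight_insert_nth_raising_des[OF assms]
    by (cases "des s = k"; cases "Suc (des s) = k") (simp_all add: algebra_simps)
qed

end

definition weight_sum :: "real \<Rightarrow> real \<Rightarrow> real \<Rightarrow> nat \<Rightarrow> nat \<Rightarrow> real" where
  "weight_sum a b q n k = (\<Sum>s\<in>{s\<in>permutations_of_set {1..n+1}. des s = k}. weight a b q n s)"

lemma weight_sum_eq_sum_if:
  "weight_sum a b q n k
    = (\<Sum>s\<in>permutations_of_set {1..Suc n}. if des s = k then weight a b q n s else 0)"
  unfolding weight_sum_def by (simp add: sum.inter_filter)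

lemma weight_sum_0: "0 < q \<Longrightarrow> weight_sum a b q 0 k = (if k = 0 then 1 else 0)"
proof -
  assume "0 < q"
  have "des [1] = 0" "maj [1] = 0"
    by (simp_all add: des_def maj_def descents_def)
  moreover have "lrmin_positions [1] = {0}"
    by (auto simp: lrmin_positions_def)
  then have "lrmin [1] = 1" "rlmin [1] = 1"
    by (simp_all add: lrmin_eq_card rlmin_eq_lrmin_rev)
  ultimately have "weight a b q 0 [1] = 1"
    using \<open>0 < q\<close> by (simp add: weight_def majt_def)
  then show ?thesis
    using \<open>des [1] = 0\<close> by (simp add: weight_sum_eq_sum_if)
qed

lemma weight_sum_Suc:
  assumes q: "0 < q" "q \<noteq> 1"
  shows "weight_sum a b q (Suc n) k
    = (if k = 0 then 0
       else q powr (b + real k - 1) * qint q (real (Suc n) - real k + a) * weight_sum a b q n (k - 1))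
      + qint q (real k + b) * weight_sum a b q n k"
proof -
  let ?P = "permutations_of_set {1..Suc n}" and ?m = "Suc (Suc n)"
  let ?H = "\<lambda>t. if des t = k then weight a b q (Suc n) t else 0"
  let ?\<beta> = "q powr (b + real k - 1) * qint q (real (Suc n) - real k + a)"
  have "{1..Suc (Suc n)} = insert ?m {1..Suc n}" "?m \<notin> {1..Suc n}" "card {1..Suc n} = Suc n"
    by auto
  then have bij: "bij_betw (\<lambda>(s, i). insert_nth ?m i s) (?P \<times> {..Suc n})
      (permutations_of_set {1..Suc (Suc n)})"
    using bij_betw_insert_nth_permutations[of ?m "{1..Suc n}"] by simp
  have "weight_sum a b q (Suc n) k = (\<Sum>(s, i)\<in>?P \<times> {..Suc n}. ?H (insert_nth ?m i s))"
    unfolding weight_sum_eq_sum_if sum.reindex_bij_betw[OF bij, symmetric]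
    by (simp add: split_def cong: if_cong)
  also have "\<dots> = (\<Sum>s\<in>?P. \<Sum>i\<le>Suc n. ?H (insert_nth ?m i s))"
    by (rule sum.cartesian_product[symmetric])
  also have "\<dots> = (\<Sum>s\<in>?P. qint q (real k + b) * (if des s = k then weight a b q n s else 0)
      + ?\<beta> * (if Suc (des s) = k then weight a b q n s else 0))"
  proof (rule sum.cong)
    fix s assume "s \<in> ?P"
    then have "length s = Suc n" "\<forall>x\<in>set s. x < ?m"
      using length_finite_permutations_of_set[of s] by (auto simp: permutations_of_set_def)
    then show "(\<Sum>i\<le>Suc n. ?H (insert_nth ?m i s))
      = qint q (real k + b) * (if des s = k then weight a b q n s else 0)
        + ?\<beta> * (if Suc (des s) = k then weight a b q n s else 0)"
      using sum_weight_insert_nth[of s n ?m q k a b] q by (auto simp: algebra_simps)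
  qed simp
  also have "\<dots> = qint q (real k + b) * weight_sum a b q n k
      + ?\<beta> * (\<Sum>s\<in>?P. if Suc (des s) = k then weight a b q n s else 0)"
    by (simp add: sum.distrib sum_distrib_left weight_sum_eq_sum_if)
  also have "(\<Sum>s\<in>?P. if Suc (des s) = k then weight a b q n s else 0)
      = (if k = 0 then 0 else weight_sum a b q n (k - 1))"
    unfolding weight_sum_eq_sum_if by (cases k) auto
  finally show ?thesis
    by (simp add: algebra_simps)
qed

lemma E_eq_weight_sum: "0 < q \<Longrightarrow> q \<noteq> 1 \<Longrightarrow> E a b q n k = weight_sum a b q n k"
  by (induction n arbitrary: k) (simp_all add: weight_sum_0 weight_sum_Suc)

(* The identity holds for every k (for k > n both sides vanish). *)
theorem theorem1p1:
  fixes a b q :: real and n k :: nat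
  assumes "0 < q" and "q \<noteq> 1" and "k \<le> n"
  shows "E a b q n k =
    (\<Sum>s\<in>{s\<in>permutations_of_set {1..n+1}. des s = k}.
        qint q a ^ (lrmin s - 1) * qint q b ^ (rlmin s - 1) * q powr (majt a b n s))"
  using E_eq_weight_sum[OF assms(1,2)] unfolding weight_sum_def weight_def by simp

end
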